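(* For every language $L\subseteq\Sigma^+$: if $(\Sigma^+\setminus L)\in LinConj$, then $L\in\mathtt{incl}$-$\mathtt{ESO}$-$\mathtt{HORN}$.
   Context: Fix a finite alphabet $\Sigma$. A nonempty word $w=w_1\cdots w_n$ is represented by the structure $\langle w\rangle=([1,n];(Q_s)_{s\in\Sigma},\mathtt{min},\mathtt{max},\mathtt{suc},\mathtt{pred})$ with $Q_s(i)\iff w_i=s$, $\mathtt{min}(i)\iff i=1$, $\mathtt{max}(i)\iff i=n$, $\mathtt{suc}(i)=\min(i+1,n)$, $\mathtt{pred}(i)=\max(i-1,1)$. For an integer $a$, $x+a$ denotes $\mathtt{suc}^a(x)$ if $a\ge0$ and $\mathtt{pred}^{-a}(x)$ if $a<0$; $y-b=\mathtt{pred}^b(y)$. An inclusion Horn formula is $\Phi=\exists\mathbf{R}\forall x\forall y\,\psi(x,y)$, $\mathbf{R}$ a finite set of binary relation symbols, $\psi$ a conjunction of Horn clauses over $\{(Q_s)_{s\in\Sigma},\mathtt{min},\mathtt{max},\mathtt{suc},\mathtt{pred}\}\cup\mathbf{R}\cup\{=,\le,<\}$, each of the form $x\le y\wedge\delta_1\wedge\cdots\wedge\delta_r\to\delta_0$ with $\delta_0$ an atom $R(x,y)$ ($R\in\mathbf{R}$) or $\bot$, each $\delta_i$ one of: $U(x+a)$, $\neg U(x+a)$, $U(y+a)$, $\neg U(y+a)$ for $U\in\{(Q_s)_{s\in\Sigma},\mathtt{min},\mathtt{max}\}$, $a\in\mathbb Z$; $x=y$ or $x<y$; $S(x+a,y-b)\wedge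 x+a\le y-b$ with $S\in\mathbf{R}$, $a,b\ge0$. $\mathtt{incl}$-$\mathtt{ESO}$-$\mathtt{HORN}$ is the class of languages $\{w\in\Sigma^+:\langle w\rangle\models\Phi\}$. A linear conjunctive grammar is $G=(\Sigma,N,P,S)$ with nonterminals $N$, start symbol $S\in N$, and a finite set $P$ of rules $A\to\alpha_1\&\cdots\&\alpha_k$ ($k\ge1$), each $\alpha_i\in\Sigma^*\cup\Sigma^*N\Sigma^*$. The languages $(L(A))_{A\in N}$ form the least (componentwise) solution of $L(A)=\bigcup_{(A\to\alpha_1\&\cdots\&\alpha_k)\in P}\bigcap_iL(\alpha_i)$, where $L(uBv)=uL(B)v$, $L(u)=\{u\}$ for $u,v\in\Sigma^*$, $B\in N$; $L(G)=L(S)$. $LinConj$ is the class of languages generated by such grammars. *)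

theory Defs
  imports Main
begin

text \<open>A nonempty word w of length n is viewed as a structure with domain [1,n].
  Position i (1 \<le> i \<le> n) carries the letter w ! (i - 1).\<close>

definition suc_pos :: "nat \<Rightarrow> nat \<Rightarrow> nat" where
  "suc_pos n i = min (i + 1) n"

definition pred_pos :: "nat \<Rightarrow> nat" where
  "pred_pos i = max (i - 1) 1"

definition shift :: "nat \<Rightarrow> nat \<Rightarrow> int \<Rightarrow> nat" where
  "shift n x a = (if a \<ge> 0 then (suc_pos n ^^ nat a) x else (pred_pos ^^ nat (- a)) x)"

datatype 'a upred = Qs 'a | MinP | MaxP

datatype fovar = VX | VY

datatype 'a hatom =
    PosU "'a upred" fovar int
  | NegU "'a upred" fovar int
  | EqXY
  | LtXY
  | RelA nat nat nat                 \<comment> \<open>S(x + a, y - b) \<and> x + a \<le> y - b, with a, b \<ge> 0\<close>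

datatype hhead = HeadRel nat | HeadBot

text \<open>A clause x \<le> y \<and> \<delta>1 \<and> ... \<and> \<delta>r \<longrightarrow> \<delta>0 is (body list, head).
  An inclusion Horn formula \<exists>R \<forall>x \<forall>y \<psi> is given by the list of clauses of \<psi>;
  the existentially quantified relation symbols are those occurring in the clauses
  (quantifying over interpretations of all symbols is equivalent).\<close>
type_synonym 'a hclause = "'a hatom list \<times> hhead"
type_synonym 'a hformula = "'a hclause list"

definition upred_holds :: "'a list \<Rightarrow> 'a upred \<Rightarrow> nat \<Rightarrow> bool" where
  "upred_holds w U i = (case U of
      Qs s \<Rightarrow> w ! (i - 1) = s
    | MinP \<Rightarrow> i = 1
    | MaxP \<Rightarrow> i = length w)"

definition var_val :: "fovar \<Rightarrow> nat \<Rightarrow> nat \<Rightarrow> nat" where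
  "var_val v x y = (case v of VX \<Rightarrow> x | VY \<Rightarrow> y)"

fun hatom_holds :: "'a list \<Rightarrow> (nat \<Rightarrow> nat \<Rightarrow> nat \<Rightarrow> bool) \<Rightarrow> nat \<Rightarrow> nat \<Rightarrow> 'a hatom \<Rightarrow> bool" where
  "hatom_holds w \<rho> x y (PosU U v a) = upred_holds w U (shift (length w) (var_val v x y) a)"
| "hatom_holds w \<rho> x y (NegU U v a) = (\<not> upred_holds w U (shift (length w) (var_val v x y) a))"
| "hatom_holds w \<rho> x y EqXY = (x = y)"
| "hatom_holds w \<rho> x y LtXY = (x < y)"
| "hatom_holds w \<rho> x y (RelA S a b) =
     (\<rho> S (shift (length w) x (int a)) (shift (length w) y (- int b)) \<and>
      shift (length w) x (int a) \<le> shift (length w) y (- int b))"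

fun hhead_holds :: "(nat \<Rightarrow> nat \<Rightarrow> nat \<Rightarrow> bool) \<Rightarrow> nat \<Rightarrow> nat \<Rightarrow> hhead \<Rightarrow> bool" where
  "hhead_holds \<rho> x y (HeadRel R) = \<rho> R x y"
| "hhead_holds \<rho> x y HeadBot = False"

definition hclause_holds :: "'a list \<Rightarrow> (nat \<Rightarrow> nat \<Rightarrow> nat \<Rightarrow> bool) \<Rightarrow> nat \<Rightarrow> nat \<Rightarrow> 'a hclause \<Rightarrow> bool" where
  "hclause_holds w \<rho> x y c =
     ((x \<le> y \<and> (\<forall>\<delta>\<in>set (fst c). hatom_holds w \<rho> x y \<delta>)) \<longrightarrow> hhead_holds \<rho> x y (snd c))"

definition hmodels :: "'a list \<Rightarrow> 'a hformula \<Rightarrow> bool" where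
  "hmodels w \<Phi> = (\<exists>\<rho>. \<forall>x\<in>{1..length w}. \<forall>y\<in>{1..length w}. \<forall>c\<in>set \<Phi>. hclause_holds w \<rho> x y c)"

definition incl_ESO_HORN :: "'a list set set" where
  "incl_ESO_HORN = {L. \<exists>\<Phi>. L = {w. w \<noteq> [] \<and> hmodels w \<Phi>}}"

datatype 'a lconj = TermC "'a list" | NontC "'a list" nat "'a list"

type_synonym 'a lrule = "nat \<times> 'a lconj list"
type_synonym 'a lgrammar = "'a lrule list \<times> nat"

text \<open>The least solution of the language equations, as an inductive predicate.\<close>
inductive lderives :: "'a lrule list \<Rightarrow> nat \<Rightarrow> 'a list \<Rightarrow> bool" for P where
  rule: "(A, \<alpha>s) \<in> set P \<Longrightarrow>
         (\<forall>\<alpha>\<in>set \<alpha>s.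
              (\<exists>u. \<alpha> = TermC u \<and> w = u) \<or>
              (\<exists>u B v x. \<alpha> = NontC u B v \<and> w = u @ x @ v \<and> lderives P B x)) \<Longrightarrow>
         lderives P A w"

definition lgrammar_wf :: "'a lgrammar \<Rightarrow> bool" where
  "lgrammar_wf G = (\<forall>r\<in>set (fst G). snd r \<noteq> [])"

definition lgrammar_lang :: "'a lgrammar \<Rightarrow> 'a list set" where
  "lgrammar_lang G = {w. lderives (fst G) (snd G) w}"

definition LinConj :: "'a list set set" where
  "LinConj = {L. \<exists>G. lgrammar_wf G \<and> L = lgrammar_lang G}"

end

theory Submission
  imports Defs "HOL-Library.Countable"
begin

text \<open>The Horn formula has a
  relation for each nonterminal, and one for each terminal word and each context u B v obtained
  from a conjunct of a rule by deleting outer letters.  Its clauses derive R(x, y) whenever the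
  segment w_x ... w_y lies in the language of R, peeling off one letter at a time, and a rule
  A \<rightarrow> \<alpha>1 & ... & \<alpha>k becomes the clause that concludes A(x, y) from all the relations of the
  \<alpha>i at (x, y).  The canonical interpretation, in which every relation holds exactly on the
  segments in its language, satisfies these clauses and is contained in every interpretation that
  does.  Hence the additional clause min(x) \<and> max(y) \<and> S(x, y) \<rightarrow> \<bottom> is satisfiable exactly
  when w is not generated.\<close>

datatype 'a rel_sym = Nt nat | Word "'a list" | Ctx "'a list" nat "'a list"

instance rel_sym :: (countable) countable
  by countable_datatype

fun rel_sym_derives :: "'a lrule list \<Rightarrow> 'a rel_sym \<Rightarrow> 'a list \<Rightarrow> bool" where
  "rel_sym_derives P (Nt A) s = lderives P A s"
| "rel_sym_derives P (Word t) s = (s = t)"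
| "rel_sym_derives P (Ctx u B v) s = (\<exists>m. s = u @ m @ v \<and> lderives P B m)"

fun conj_sym :: "'a lconj \<Rightarrow> 'a rel_sym" where
  "conj_sym (TermC t) = Word t"
| "conj_sym (NontC u B v) = Ctx u B v"

lemma rel_sym_derives_conj_sym:
  "rel_sym_derives P (conj_sym \<alpha>) s \<longleftrightarrow>
     (\<exists>u. \<alpha> = TermC u \<and> s = u) \<or> (\<exists>u B v m. \<alpha> = NontC u B v \<and> s = u @ m @ v \<and> lderives P B m)"
  by (cases \<alpha>) auto

subsection \<open>Segments of a word\<close>

text \<open>Positions are 1-based: segment w x y is the factor w_x ... w_y.\<close>

definition segment :: "'a list \<Rightarrow> nat \<Rightarrow> nat \<Rightarrow> 'a list" where
  "segment w x y = take (Suc y - x) (drop (x - 1) w)"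

lemma length_segment: "1 \<le> x \<Longrightarrow> y \<le> length w \<Longrightarrow> length (segment w x y) = Suc y - x"
  unfolding segment_def by simp

lemma segment_same: "1 \<le> x \<Longrightarrow> x \<le> length w \<Longrightarrow> segment w x x = [w ! (x - 1)]"
  unfolding segment_def by (simp add: take_Suc_conv_app_nth)

lemma segment_Cons:
  assumes "1 \<le> x" "x < y" "y \<le> length w"
  shows "segment w x y = w ! (x - 1) # segment w (x + 1) y"
proof -
  have "drop (x - 1) w = w ! (x - 1) # drop x w"
    using assms Cons_nth_drop_Suc[of "x - 1" w] by simp
  moreover have "Suc y - x = Suc (Suc y - (x + 1))"
    using assms by simp
  ultimately show ?thesis
    unfolding segment_def by simp
qed

lemma segment_snoc:
  assumes "1 \<le> x" "x < y" "y \<le> length w"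
  shows "segment w x y = segment w x (y - 1) @ [w ! (y - 1)]"
proof -
  have "Suc y - x = Suc (Suc (y - 1) - x)"
    using assms by simp
  moreover have "Suc (y - 1) - x < length (drop (x - 1) w)"
    using assms by simp
  ultimately show ?thesis
    using assms unfolding segment_def by (simp add: take_Suc_conv_app_nth)
qed

lemma segment_whole: "segment w 1 (length w) = w"
  unfolding segment_def by simp

lemma shift_0 [simp]: "shift n x 0 = x"
  by (simp add: shift_def)

lemma shift_1 [simp]: "shift n x 1 = min (x + 1) n"
  by (simp add: shift_def suc_pos_def)

lemma shift_minus_1 [simp]: "shift n x (- 1) = max (x - 1) 1"
  by (simp add: shift_def pred_pos_def)

definition left_step :: "'a \<Rightarrow> 'a::countable rel_sym \<Rightarrow> 'a rel_sym \<Rightarrow> 'a hclause" where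
  "left_step a R R' = ([PosU (Qs a) VX 0, LtXY, RelA (to_nat R) 1 0], HeadRel (to_nat R'))"

definition right_step :: "'a \<Rightarrow> 'a::countable rel_sym \<Rightarrow> 'a rel_sym \<Rightarrow> 'a hclause" where
  "right_step a R R' = ([PosU (Qs a) VY 0, LtXY, RelA (to_nat R) 0 1], HeadRel (to_nat R'))"

definition letter_clause :: "'a \<Rightarrow> 'a::countable rel_sym \<Rightarrow> 'a hclause" where
  "letter_clause a R = ([PosU (Qs a) VX 0, EqXY], HeadRel (to_nat R))"

definition conj_clause :: "'a::countable rel_sym list \<Rightarrow> 'a rel_sym \<Rightarrow> 'a hclause" where
  "conj_clause Rs R' = (map (\<lambda>R. RelA (to_nat R) 0 0) Rs, HeadRel (to_nat R'))"

definition reject_clause :: "nat \<Rightarrow> 'a::countable hclause" where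
  "reject_clause S = ([PosU MinP VX 0, PosU MaxP VY 0, RelA (to_nat (Nt S :: 'a rel_sym)) 0 0], HeadBot)"

lemma left_step_holds:
  assumes "1 \<le> x" "y \<le> length w"
  shows "hclause_holds w \<rho> x y (left_step a R R') \<longleftrightarrow>
    (x < y \<and> w ! (x - 1) = a \<and> \<rho> (to_nat R) (x + 1) y \<longrightarrow> \<rho> (to_nat R') x y)"
  using assms
  by (auto simp: left_step_def hclause_holds_def upred_holds_def var_val_def min_def)

lemma right_step_holds:
  assumes "1 \<le> x" "y \<le> length w"
  shows "hclause_holds w \<rho> x y (right_step a R R') \<longleftrightarrow>
    (x < y \<and> w ! (y - 1) = a \<and> \<rho> (to_nat R) x (y - 1) \<longrightarrow> \<rho> (to_nat R') x y)"
proof -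
  have "max (y - 1) 1 = y - 1" if "x < y"
    using assms that by simp
  then show ?thesis
    using assms by (auto simp: right_step_def hclause_holds_def upred_holds_def var_val_def)
qed

lemma letter_clause_holds:
  "hclause_holds w \<rho> x y (letter_clause a R) \<longleftrightarrow> (x = y \<and> w ! (x - 1) = a \<longrightarrow> \<rho> (to_nat R) x y)"
  by (auto simp: letter_clause_def hclause_holds_def upred_holds_def var_val_def)

lemma conj_clause_holds:
  "hclause_holds w \<rho> x y (conj_clause Rs R') \<longleftrightarrow>
    (x \<le> y \<and> (\<forall>R\<in>set Rs. \<rho> (to_nat R) x y) \<longrightarrow> \<rho> (to_nat R') x y)"
  by (auto simp: conj_clause_def hclause_holds_def)

lemma reject_clause_holds:
  "hclause_holds w \<rho> x y (reject_clause S :: 'a::countable hclause) \<longleftrightarrow>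
    \<not> (x = 1 \<and> y = length w \<and> x \<le> y \<and> \<rho> (to_nat (Nt S :: 'a rel_sym)) x y)"
  by (auto simp: reject_clause_def hclause_holds_def upred_holds_def var_val_def)

subsection \<open>The formula of a grammar\<close>

fun word_clauses :: "'a::countable list \<Rightarrow> 'a hclause list" where
  "word_clauses [] = []"
| "word_clauses (a # t) = letter_clause a (Word [a]) # left_step a (Word t) (Word (a # t)) # word_clauses t"

text \<open>The right context is passed reversed, so that it is peeled from its last letter.\<close>

fun right_clauses :: "nat \<Rightarrow> 'a::countable list \<Rightarrow> 'a hclause list" where
  "right_clauses B [] = [conj_clause [Nt B] (Ctx [] B [])]"
| "right_clauses B (a # rv) =
     right_step a (Ctx [] B (rev rv)) (Ctx [] B (rev rv @ [a])) # right_clauses B rv"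

fun left_clauses :: "'a::countable list \<Rightarrow> nat \<Rightarrow> 'a list \<Rightarrow> 'a hclause list" where
  "left_clauses [] B v = right_clauses B (rev v)"
| "left_clauses (a # u) B v = left_step a (Ctx u B v) (Ctx (a # u) B v) # left_clauses u B v"

text \<open>Peeling letters cannot reach an empty middle part, so a nullable B is handled by reading
  u v as a terminal word.\<close>

definition ctx_clauses :: "'a::countable lrule list \<Rightarrow> 'a list \<Rightarrow> nat \<Rightarrow> 'a list \<Rightarrow> 'a hclause list" where
  "ctx_clauses P u B v = left_clauses u B v @
     (if lderives P B [] then conj_clause [Word (u @ v)] (Ctx u B v) # word_clauses (u @ v) else [])"

fun conj_clauses :: "'a::countable lrule list \<Rightarrow> 'a lconj \<Rightarrow> 'a hclause list" where
  "conj_clauses P (TermC t) = word_clauses t"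
| "conj_clauses P (NontC u B v) = ctx_clauses P u B v"

definition rule_clauses :: "'a::countable lrule list \<Rightarrow> 'a lrule \<Rightarrow> 'a hclause list" where
  "rule_clauses P r = conj_clause (map conj_sym (snd r)) (Nt (fst r)) # concat (map (conj_clauses P) (snd r))"

definition grammar_formula :: "'a::countable lrule list \<Rightarrow> nat \<Rightarrow> 'a hformula" where
  "grammar_formula P S = reject_clause S # concat (map (rule_clauses P) P)"

definition satisfies :: "'a list \<Rightarrow> (nat \<Rightarrow> nat \<Rightarrow> nat \<Rightarrow> bool) \<Rightarrow> 'a hformula \<Rightarrow> bool" where
  "satisfies w \<rho> \<Phi> \<longleftrightarrow> (\<forall>x\<in>{1..length w}. \<forall>y\<in>{1..length w}. \<forall>c\<in>set \<Phi>. hclause_holds w \<rho> x y c)"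

lemma hmodels_iff_satisfies: "hmodels w \<Phi> \<longleftrightarrow> (\<exists>\<rho>. satisfies w \<rho> \<Phi>)"
  unfolding hmodels_def satisfies_def ..

subsection \<open>Soundness of the canonical interpretation\<close>

definition canonical_rel :: "'a::countable lrule list \<Rightarrow> 'a list \<Rightarrow> nat \<Rightarrow> nat \<Rightarrow> nat \<Rightarrow> bool" where
  "canonical_rel P w k x y = (\<exists>R. to_nat R = k \<and> rel_sym_derives P R (segment w x y))"

lemma canonical_rel_to_nat [simp]:
  "canonical_rel P w (to_nat R) x y = rel_sym_derives P R (segment w x y)"
  unfolding canonical_rel_def by auto

definition sound_clause :: "'a::countable lrule list \<Rightarrow> 'a hclause \<Rightarrow> bool" where
  "sound_clause P c \<longleftrightarrow> (\<forall>w x y. 1 \<le> x \<longrightarrow> y \<le> length w \<longrightarrow> hclause_holds w (canonical_rel P w) x y c)"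

lemma sound_left_step:
  assumes "\<And>s. rel_sym_derives P R s \<Longrightarrow> rel_sym_derives P R' (a # s)"
  shows "sound_clause P (left_step a R R')"
  using assms by (auto simp: sound_clause_def left_step_holds segment_Cons)

lemma sound_right_step:
  assumes "\<And>s. rel_sym_derives P R s \<Longrightarrow> rel_sym_derives P R' (s @ [a])"
  shows "sound_clause P (right_step a R R')"
  using assms by (auto simp: sound_clause_def right_step_holds segment_snoc)

lemma sound_letter_clause:
  assumes "rel_sym_derives P R [a]"
  shows "sound_clause P (letter_clause a R)"
  using assms by (auto simp: sound_clause_def letter_clause_holds segment_same)

lemma sound_conj_clause:
  assumes "\<And>s. \<forall>R\<in>set Rs. rel_sym_derives P R s \<Longrightarrow> rel_sym_derives P R' s"
  shows "sound_clause P (conj_clause Rs R')"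
  using assms by (auto simp: sound_clause_def conj_clause_holds)

lemma sound_word_clauses: "c \<in> set (word_clauses t) \<Longrightarrow> sound_clause P c"
  by (induction t) (auto intro: sound_letter_clause sound_left_step)

lemma sound_right_clauses: "c \<in> set (right_clauses B rv) \<Longrightarrow> sound_clause P c"
  by (induction rv) (auto intro!: sound_conj_clause sound_right_step)

lemma sound_left_clauses: "c \<in> set (left_clauses u B v) \<Longrightarrow> sound_clause P c"
  by (induction u) (auto intro!: sound_left_step simp: sound_right_clauses)

lemma sound_conj_clauses: "c \<in> set (conj_clauses P \<alpha>) \<Longrightarrow> sound_clause P c"
proof (cases \<alpha>)
  case (NontC u B v)
  have "sound_clause P (conj_clause [Word (u @ v)] (Ctx u B v))" if "lderives P B []"
    using that by (intro sound_conj_clause) force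
  then show "c \<in> set (conj_clauses P \<alpha>) \<Longrightarrow> ?thesis"
    using NontC by (auto simp: ctx_clauses_def sound_left_clauses sound_word_clauses split: if_splits)
qed (simp add: sound_word_clauses)

lemma sound_rule_clauses:
  assumes "r \<in> set P" "c \<in> set (rule_clauses P r)"
  shows "sound_clause P c"
proof -
  obtain A \<alpha>s where r: "r = (A, \<alpha>s)"
    by fastforce
  have "sound_clause P (conj_clause (map conj_sym \<alpha>s) (Nt A))"
  proof (rule sound_conj_clause)
    fix s
    assume "\<forall>R\<in>set (map conj_sym \<alpha>s). rel_sym_derives P R s"
    then show "rel_sym_derives P (Nt A) s"
      using lderives.rule[of A \<alpha>s P s] assms(1) r by (simp add: rel_sym_derives_conj_sym)
  qed
  then show ?thesis
    using assms(2) r by (auto simp: rule_clauses_def sound_conj_clauses)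
qed

lemma canonical_satisfies_grammar_formula:
  assumes "\<not> lderives P S w"
  shows "satisfies w (canonical_rel P w) (grammar_formula P S)"
  using assms sound_rule_clauses segment_whole[of w]
  by (fastforce simp: satisfies_def grammar_formula_def reject_clause_holds sound_clause_def)

subsection \<open>Minimality of the canonical interpretation\<close>

lemma satisfies_mono: "satisfies w \<rho> \<Phi> \<Longrightarrow> set \<Psi> \<subseteq> set \<Phi> \<Longrightarrow> satisfies w \<rho> \<Psi>"
  unfolding satisfies_def by blast

lemma satisfies_ConsD: "satisfies w \<rho> (c # \<Phi>) \<Longrightarrow> satisfies w \<rho> \<Phi>"
  unfolding satisfies_def by simp

lemma satisfies_Cons_holds:
  "satisfies w \<rho> (c # \<Phi>) \<Longrightarrow> 1 \<le> x \<Longrightarrow> x \<le> y \<Longrightarrow> y \<le> length w \<Longrightarrow> hclause_holds w \<rho> x y c"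
  unfolding satisfies_def by simp

lemma satisfies_append [simp]: "satisfies w \<rho> (\<Phi> @ \<Psi>) \<longleftrightarrow> satisfies w \<rho> \<Phi> \<and> satisfies w \<rho> \<Psi>"
  unfolding satisfies_def by auto

definition marks_occurrences ::
  "'a list \<Rightarrow> (nat \<Rightarrow> nat \<Rightarrow> nat \<Rightarrow> bool) \<Rightarrow> 'a::countable rel_sym \<Rightarrow> 'a list \<Rightarrow> bool" where
  "marks_occurrences w \<rho> R s \<longleftrightarrow>
     (\<forall>x y. 1 \<le> x \<longrightarrow> x \<le> y \<longrightarrow> y \<le> length w \<longrightarrow> segment w x y = s \<longrightarrow> \<rho> (to_nat R) x y)"

lemma marks_occurrencesI:
  "(\<And>x y. 1 \<le> x \<Longrightarrow> x \<le> y \<Longrightarrow> y \<le> length w \<Longrightarrow> segment w x y = s \<Longrightarrow> \<rho> (to_nat R) x y) \<Longrightarrow>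
    marks_occurrences w \<rho> R s"
  unfolding marks_occurrences_def by blast

lemma marks_occurrencesD:
  "marks_occurrences w \<rho> R s \<Longrightarrow> 1 \<le> x \<Longrightarrow> x \<le> y \<Longrightarrow> y \<le> length w \<Longrightarrow> segment w x y = s \<Longrightarrow>
    \<rho> (to_nat R) x y"
  unfolding marks_occurrences_def by blast

lemma word_clauses_complete: "satisfies w \<rho> (word_clauses t) \<Longrightarrow> marks_occurrences w \<rho> (Word t) t"
proof (induction t)
  case Nil
  show ?case
  proof (rule marks_occurrencesI)
    fix x y
    assume "1 \<le> x" "x \<le> y" "y \<le> length w" "segment w x y = []"
    then show "\<rho> (to_nat (Word [] :: 'a rel_sym)) x y"
      using length_segment[of x y w] by simp
  qed
next
  case (Cons a t)
  note sat = Cons.prems[unfolded word_clauses.simps]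
  have IH: "marks_occurrences w \<rho> (Word t) t"
    using Cons.IH satisfies_ConsD[OF satisfies_ConsD[OF sat]] .
  show ?case
  proof (rule marks_occurrencesI)
    fix x y
    assume xy: "1 \<le> x" "x \<le> y" "y \<le> length w" and seg: "segment w x y = a # t"
    show "\<rho> (to_nat (Word (a # t) :: 'a rel_sym)) x y"
    proof (cases "x = y")
      case True
      then have "w ! (x - 1) = a" "t = []"
        using xy seg segment_same[of x w] by auto
      then show ?thesis
        using satisfies_Cons_holds[OF sat xy] True by (simp add: letter_clause_holds)
    next
      case False
      then have "x < y" "w ! (x - 1) = a" "segment w (x + 1) y = t"
        using xy seg segment_Cons[of x y w] by auto
      moreover have "\<rho> (to_nat (Word t)) (x + 1) y"
        using marks_occurrencesD[OF IH] calculation xy(3) by simp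
      ultimately show ?thesis
        using satisfies_Cons_holds[OF satisfies_ConsD[OF sat] xy] xy by (simp add: left_step_holds)
    qed
  qed
qed

text \<open>In the next two lemmas the middle part m of a context is nonempty, so every peeling step
  starts from a segment of length at least two.\<close>

lemma right_clauses_complete:
  assumes "satisfies w \<rho> (right_clauses B rv)" "marks_occurrences w \<rho> (Nt B) m" "m \<noteq> []"
  shows "marks_occurrences w \<rho> (Ctx [] B (rev rv)) (m @ rev rv)"
  using assms(1)
proof (induction rv)
  case Nil
  show ?case
  proof (rule marks_occurrencesI)
    fix x y
    assume xy: "1 \<le> x" "x \<le> y" "y \<le> length w" and seg: "segment w x y = m @ rev []"
    have "\<rho> (to_nat (Nt B :: 'a rel_sym)) x y"
      using marks_occurrencesD[OF assms(2) xy] seg by simp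
    then show "\<rho> (to_nat (Ctx [] B (rev []) :: 'a rel_sym)) x y"
      using satisfies_Cons_holds[OF Nil[unfolded right_clauses.simps] xy] xy(2)
      by (simp add: conj_clause_holds)
  qed
next
  case (Cons a rv)
  note sat = Cons.prems[unfolded right_clauses.simps]
  have IH: "marks_occurrences w \<rho> (Ctx [] B (rev rv)) (m @ rev rv)"
    using Cons.IH satisfies_ConsD[OF sat] .
  show ?case
  proof (rule marks_occurrencesI)
    fix x y
    assume xy: "1 \<le> x" "x \<le> y" "y \<le> length w" and seg: "segment w x y = m @ rev (a # rv)"
    have "x < y"
      using xy seg length_segment[of x y w] assms(3) by (cases m) auto
    then have "w ! (y - 1) = a" "segment w x (y - 1) = m @ rev rv"
      using xy seg segment_snoc[of x y w] by auto
    moreover have "\<rho> (to_nat (Ctx [] B (rev rv))) x (y - 1)"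
      using marks_occurrencesD[OF IH] calculation xy \<open>x < y\<close> by simp
    ultimately show "\<rho> (to_nat (Ctx [] B (rev (a # rv)) :: 'a rel_sym)) x y"
      using satisfies_Cons_holds[OF sat xy] xy \<open>x < y\<close> by (simp add: right_step_holds)
  qed
qed

lemma left_clauses_complete:
  assumes "satisfies w \<rho> (left_clauses u B v)" "marks_occurrences w \<rho> (Nt B) m" "m \<noteq> []"
  shows "marks_occurrences w \<rho> (Ctx u B v) (u @ m @ v)"
  using assms(1)
proof (induction u)
  case Nil
  then show ?case
    using right_clauses_complete[where rv = "rev v"] assms(2,3) by simp
next
  case (Cons a u)
  note sat = Cons.prems[unfolded left_clauses.simps]
  have IH: "marks_occurrences w \<rho> (Ctx u B v) (u @ m @ v)"
    using Cons.IH satisfies_ConsD[OF sat] .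
  show ?case
  proof (rule marks_occurrencesI)
    fix x y
    assume xy: "1 \<le> x" "x \<le> y" "y \<le> length w" and seg: "segment w x y = (a # u) @ m @ v"
    have "x < y"
      using xy seg length_segment[of x y w] assms(3) by (cases m) auto
    then have "w ! (x - 1) = a" "segment w (x + 1) y = u @ m @ v"
      using xy seg segment_Cons[of x y w] by auto
    moreover have "\<rho> (to_nat (Ctx u B v)) (x + 1) y"
      using marks_occurrencesD[OF IH] calculation xy \<open>x < y\<close> by simp
    ultimately show "\<rho> (to_nat (Ctx (a # u) B v :: 'a rel_sym)) x y"
      using satisfies_Cons_holds[OF sat xy] xy \<open>x < y\<close> by (simp add: left_step_holds)
  qed
qed

lemma ctx_clauses_complete:
  assumes "satisfies w \<rho> (ctx_clauses P u B v)" "lderives P B m" "marks_occurrences w \<rho> (Nt B) m"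
  shows "marks_occurrences w \<rho> (Ctx u B v) (u @ m @ v)"
proof (cases "m = []")
  case True
  then have sat: "satisfies w \<rho> (conj_clause [Word (u @ v)] (Ctx u B v) # word_clauses (u @ v))"
    using assms(1,2) by (simp add: ctx_clauses_def)
  have word: "marks_occurrences w \<rho> (Word (u @ v)) (u @ v)"
    using word_clauses_complete satisfies_ConsD[OF sat] .
  show ?thesis
  proof (rule marks_occurrencesI)
    fix x y
    assume xy: "1 \<le> x" "x \<le> y" "y \<le> length w" and seg: "segment w x y = u @ m @ v"
    have "\<rho> (to_nat (Word (u @ v))) x y"
      using marks_occurrencesD[OF word xy] seg True by simp
    then show "\<rho> (to_nat (Ctx u B v :: 'a rel_sym)) x y"
      using satisfies_Cons_holds[OF sat xy] xy(2) by (simp add: conj_clause_holds)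
  qed
next
  case False
  have "satisfies w \<rho> (left_clauses u B v)"
    using assms(1) by (simp add: ctx_clauses_def)
  from left_clauses_complete[OF this assms(3) False] show ?thesis .
qed

lemma grammar_formula_complete:
  assumes "satisfies w \<rho> (grammar_formula P S)" "lderives P A s"
  shows "marks_occurrences w \<rho> (Nt A) s"
  using assms(2)
proof induction
  case (rule A \<alpha>s s)
  have sat: "satisfies w \<rho> (rule_clauses P (A, \<alpha>s))"
    using rule(1) by (intro satisfies_mono[OF assms(1)]) (force simp: grammar_formula_def)
  have conj: "marks_occurrences w \<rho> (conj_sym \<alpha>) s" if "\<alpha> \<in> set \<alpha>s" for \<alpha>
  proof -
    have "satisfies w \<rho> (conj_clauses P \<alpha>)"
      using that by (intro satisfies_mono[OF sat]) (force simp: rule_clauses_def)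
    then show ?thesis
      using rule(2) that by (cases \<alpha>) (auto intro: word_clauses_complete ctx_clauses_complete)
  qed
  show ?case
  proof (rule marks_occurrencesI)
    fix x y
    assume xy: "1 \<le> x" "x \<le> y" "y \<le> length w" and seg: "segment w x y = s"
    have "\<rho> (to_nat (conj_sym \<alpha>)) x y" if "\<alpha> \<in> set \<alpha>s" for \<alpha>
      using marks_occurrencesD[OF conj[OF that] xy seg] .
    then show "\<rho> (to_nat (Nt A :: 'a rel_sym)) x y"
      using satisfies_Cons_holds[OF sat[unfolded rule_clauses_def fst_conv snd_conv] xy] xy(2)
      by (simp add: conj_clause_holds)
  qed
qed

theorem grammar_formula_models_iff:
  fixes w :: "'a::countable list"
  assumes "w \<noteq> []"
  shows "hmodels w (grammar_formula P S) \<longleftrightarrow> \<not> lderives P S w"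
proof
  assume "hmodels w (grammar_formula P S)"
  then obtain \<rho> where sat: "satisfies w \<rho> (grammar_formula P S)"
    unfolding hmodels_iff_satisfies ..
  show "\<not> lderives P S w"
  proof
    assume "lderives P S w"
    then have "\<rho> (to_nat (Nt S :: 'a rel_sym)) 1 (length w)"
      using marks_occurrencesD[OF grammar_formula_complete[OF sat]] assms segment_whole[of w]
      by (simp add: Suc_le_eq)
    moreover have "1 \<le> length w"
      using assms by (simp add: Suc_le_eq)
    ultimately show False
      using satisfies_Cons_holds[OF sat[unfolded grammar_formula_def] order_refl _ order_refl]
      by (simp add: reject_clause_holds)
  qed
next
  assume "\<not> lderives P S w"
  then show "hmodels w (grammar_formula P S)"
    unfolding hmodels_iff_satisfies by (blast intro: canonical_satisfies_grammar_formula)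
qed

theorem lemma8:
  fixes L :: "('a::finite) list set"
  assumes "\<forall>w\<in>L. w \<noteq> []"
    and "{w. w \<noteq> [] \<and> w \<notin> L} \<in> LinConj"
  shows "L \<in> incl_ESO_HORN"
proof -
  obtain P S where "{w. w \<noteq> [] \<and> w \<notin> L} = {w. lderives P S w}"
    using assms(2) unfolding LinConj_def lgrammar_lang_def by auto
  then have "L = {w. w \<noteq> [] \<and> hmodels w (grammar_formula P S)}"
    using assms(1) grammar_formula_models_iff by blast
  then show ?thesis
    unfolding incl_ESO_HORN_def by blast
qed

end
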